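(* Let $f:\mathbb{R}^n\to\mathbb{R}$ be subdifferentiable with subgradient Lipschitz continuous with constant $L>0$ (i.e. $\|g_x-g_y\|\le L\|x-y\|$ for all $x,y$, $g_x\in\partial f(x)$, $g_y\in\partial f(y)$). Let $M\ge 0$ be an integer, $0<\gamma<1$, and $(\eta_k)_{k\ge0}$ a sequence of positive numbers with $\sum_k\eta_k<\infty$. Consider iterates $x_{k+1}=x_k+\alpha_k d_k$, where at step $k$ we are given $g_k\in\partial f(x_k)$ and a nonzero search direction $d_k\in\mathbb{R}^n$, and $\alpha_k=(1/2)^{h_k}$ where $h_k$ is the smallest integer in $\{0,1,2,\dots\}$ such that $$f(x_k+\alpha_k d_k)\le \max_{0\le j\le \min\{k,M\}} f(x_{k-j})+\gamma\alpha_k g_k^Td_k+\eta_k .$$ Then for each $k$, either $\alpha_k=1$ or $$\alpha_k\ge \frac{\gamma-1}{L}\,\frac{g_k^Td_k}{\|d_k\|^2}.$$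
   Context: A subgradient of $f$ at $x$ is any $g\in\mathbb{R}^n$ with $f(y)\ge f(x)+g^T(y-x)$ for all $y$; $\partial f(x)$ is the set of subgradients at $x$, and $f$ is subdifferentiable if $\partial f(x)\neq\emptyset$ everywhere. *)

theory Defs
  imports "HOL-Analysis.Analysis"
begin

definition subdifferential :: "(real^'n \<Rightarrow> real) \<Rightarrow> real^'n \<Rightarrow> (real^'n) set" where
  "subdifferential f x = {g. \<forall>y. f y \<ge> f x + g \<bullet> (y - x)}"

definition subdifferentiable :: "(real^'n \<Rightarrow> real) \<Rightarrow> bool" where
  "subdifferentiable f \<longleftrightarrow> (\<forall>x. subdifferential f x \<noteq> {})"

end

theory Submission
  imports Defs
begin

(*
  A subgradient that is Lipschitz with constant L yields the quadratic upper bound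
  f(x + t d) <= f(x) + t g'd + L t^2 |d|^2 / 2 for g in the subdifferential at x and t >= 0:
  summing the subgradient inequalities at the points of a uniform partition of the segment
  [x, x + t d] gives this bound up to an error of order 1/N, N the number of pieces.
  If alpha_k < 1, the backtracking test failed at the step 2 alpha_k; as f(x_k) is at most
  the nonmonotone reference value and eta_k > 0, this failure is compatible with the
  quadratic bound only if alpha_k exceeds the stated threshold.
*)

lemma subdifferential_le:
  assumes "G \<in> subdifferential f y"
  shows "f y \<le> f z + G \<bullet> (y - z)"
proof -
  have "f z \<ge> f y + G \<bullet> (z - y)"
    using assms unfolding subdifferential_def by blast
  moreover have "G \<bullet> (z - y) = - (G \<bullet> (y - z))"
    by (metis inner_minus_right minus_diff_eq)
  ultimately show ?thesis by linarith
qed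

lemma subgradient_partition_bound:
  fixes f :: "real^'n \<Rightarrow> real" and x g d :: "real^'n" and L s :: real
  assumes subdiff: "subdifferentiable f"
    and Lip: "\<And>y G. G \<in> subdifferential f y \<Longrightarrow> norm (G - g) \<le> L * norm (y - x)"
    and s: "s \<ge> 0"
  shows "f (x + (real m * s) *\<^sub>R d)
           \<le> f x + real m * s * (g \<bullet> d) + L * (norm d)^2 * s^2 * (real m * (real m + 1) / 2)"
proof (induction m)
  case 0
  show ?case by simp
next
  case (Suc m)
  define y where "y = x + (real m * s) *\<^sub>R d"
  define y' where "y' = x + (real (Suc m) * s) *\<^sub>R d"
  obtain G where G: "G \<in> subdifferential f y'"
    using subdiff unfolding subdifferentiable_def by blast
  have "y' - y = s *\<^sub>R d"
    unfolding y_def y'_def by (simp add: algebra_simps)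
  then have step: "f y' \<le> f y + s * (G \<bullet> d)"
    using subdifferential_le[OF G, of y] by simp
  have "norm (G - g) \<le> L * (real (Suc m) * s * norm d)"
    using Lip[OF G] s by (simp add: y'_def)
  then have "(G - g) \<bullet> d \<le> L * (real (Suc m) * s * norm d) * norm d"
    by (meson norm_cauchy_schwarz mult_right_mono norm_ge_zero order_trans)
  then have "G \<bullet> d \<le> g \<bullet> d + L * real (Suc m) * s * (norm d)^2"
    by (simp add: inner_diff_left power2_eq_square mult.assoc)
  from step mult_left_mono[OF this s] Suc.IH
  have "f y' \<le> f x + real m * s * (g \<bullet> d) + L * (norm d)^2 * s^2 * (real m * (real m + 1) / 2)
                + s * (g \<bullet> d + L * real (Suc m) * s * (norm d)^2)"
    unfolding y_def by linarith
  also have "\<dots> = f x + real (Suc m) * s * (g \<bullet> d)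
                   + L * (norm d)^2 * s^2 * (real (Suc m) * (real (Suc m) + 1) / 2)"
    by (simp add: algebra_simps power2_eq_square add_divide_distrib)
  finally show ?case
    unfolding y'_def .
qed

lemma subgradient_lipschitz_descent:
  fixes f :: "real^'n \<Rightarrow> real" and x g d :: "real^'n" and L t :: real
  assumes subdiff: "subdifferentiable f"
    and Lip: "\<And>y G. G \<in> subdifferential f y \<Longrightarrow> norm (G - g) \<le> L * norm (y - x)"
    and t: "t \<ge> 0"
  shows "f (x + t *\<^sub>R d) \<le> f x + t * (g \<bullet> d) + L * (norm d)^2 * t^2 / 2"
proof -
  define C where "C = L * (norm d)^2 * t^2 / 2"
  have partition: "f (x + t *\<^sub>R d) \<le> f x + t * (g \<bullet> d) + C + C / real (Suc n)" for n
  proof -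
    define N where "N = real (Suc n)"
    have N: "N > 0" unfolding N_def by simp
    have "f (x + (N * (t / N)) *\<^sub>R d)
            \<le> f x + N * (t / N) * (g \<bullet> d) + L * (norm d)^2 * (t / N)^2 * (N * (N + 1) / 2)"
      using subgradient_partition_bound[OF subdiff Lip, of "t / N" "Suc n" d] t N
      unfolding N_def by simp
    also have "L * (norm d)^2 * (t / N)^2 * (N * (N + 1) / 2) = C + C / N"
      unfolding C_def using N by (simp add: field_simps power2_eq_square)
    finally show ?thesis
      using N unfolding N_def by simp
  qed
  have "(\<lambda>n. f x + t * (g \<bullet> d) + C + C / real (Suc n)) \<longlonglongrightarrow> f x + t * (g \<bullet> d) + C + 0"
    by (intro tendsto_add tendsto_const LIMSEQ_Suc[OF lim_const_over_n])
  then have "f (x + t *\<^sub>R d) \<le> f x + t * (g \<bullet> d) + C + 0"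
    using partition by (auto intro: LIMSEQ_le_const)
  then show ?thesis
    unfolding C_def by simp
qed

lemma failed_armijo_step_lower_bound:
  fixes f :: "real^'n \<Rightarrow> real" and x g d :: "real^'n" and L \<gamma> R \<eta> b :: real
  assumes "f (x + b *\<^sub>R d) \<le> f x + b * (g \<bullet> d) + L * (norm d)^2 * b^2 / 2"
    and "\<not> f (x + b *\<^sub>R d) \<le> R + \<gamma> * b * (g \<bullet> d) + \<eta>"
    and "f x \<le> R" "\<eta> \<ge> 0" "b > 0" "L > 0" "d \<noteq> 0"
  shows "(\<gamma> - 1) / L * ((g \<bullet> d) / (norm d)^2) < b / 2"
proof -
  have "b * ((\<gamma> - 1) * (g \<bullet> d)) < b * (L * (norm d)^2 * (b / 2))"
    using assms by (simp add: algebra_simps power2_eq_square)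
  then have "(\<gamma> - 1) * (g \<bullet> d) < L * (norm d)^2 * (b / 2)"
    using \<open>b > 0\<close> by simp
  moreover have "L * (norm d)^2 > 0"
    using assms by simp
  ultimately show ?thesis
    by (simp add: pos_divide_less_eq mult.commute)
qed

theorem lemma3:
  fixes f :: "real^'n \<Rightarrow> real" and L \<gamma> :: real and M :: nat
    and \<eta> :: "nat \<Rightarrow> real"
    and x g d :: "nat \<Rightarrow> real^'n" and \<alpha> :: "nat \<Rightarrow> real" and h :: "nat \<Rightarrow> nat"
  assumes subdiff: "subdifferentiable f"
    and Lpos: "L > 0"
    and Lip: "\<And>x y gx gy. gx \<in> subdifferential f x \<Longrightarrow> gy \<in> subdifferential f y \<Longrightarrow>
               norm (gx - gy) \<le> L * norm (x - y)"
    and gamma: "0 < \<gamma>" "\<gamma> < 1"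
    and eta_pos: "\<And>k. \<eta> k > 0"
    and eta_sum: "summable \<eta>"
    and g_sub: "\<And>k. g k \<in> subdifferential f (x k)"
    and d_nz: "\<And>k. d k \<noteq> 0"
    and iter: "\<And>k. x (Suc k) = x k + \<alpha> k *\<^sub>R d k"
    and alpha_def: "\<And>k. \<alpha> k = (1/2) ^ h k"
    and h_ok: "\<And>k. f (x k + (1/2) ^ h k *\<^sub>R d k)
                 \<le> Max ((\<lambda>j. f (x (k - j))) ` {0..min k M})
                    + \<gamma> * (1/2) ^ h k * (g k \<bullet> d k) + \<eta> k"
    and h_least: "\<And>k i. i < h k \<Longrightarrow> \<not> (f (x k + (1/2) ^ i *\<^sub>R d k)
                 \<le> Max ((\<lambda>j. f (x (k - j))) ` {0..min k M})
                    + \<gamma> * (1/2) ^ i * (g k \<bullet> d k) + \<eta> k)"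
  shows "\<forall>k. \<alpha> k = 1 \<or> \<alpha> k \<ge> (\<gamma> - 1) / L * ((g k \<bullet> d k) / (norm (d k))^2)"
proof
  fix k
  show "\<alpha> k = 1 \<or> \<alpha> k \<ge> (\<gamma> - 1) / L * ((g k \<bullet> d k) / (norm (d k))^2)"
  proof (cases "h k")
    case 0
    then show ?thesis using alpha_def by simp
  next
    case (Suc i)
    define b :: real where "b = (1/2) ^ i"
    have "\<alpha> k = b / 2"
      unfolding b_def using alpha_def Suc by simp
    moreover have "f (x k) \<le> Max ((\<lambda>j. f (x (k - j))) ` {0..min k M})"
      by (rule Max_ge) (auto intro!: image_eqI[where x=0])
    moreover have "f (x k + b *\<^sub>R d k) \<le> f (x k) + b * (g k \<bullet> d k) + L * (norm (d k))^2 * b^2 / 2"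
      using subgradient_lipschitz_descent[OF subdiff Lip[OF _ g_sub]]
      unfolding b_def by simp
    moreover have "\<not> f (x k + b *\<^sub>R d k)
        \<le> Max ((\<lambda>j. f (x (k - j))) ` {0..min k M}) + \<gamma> * b * (g k \<bullet> d k) + \<eta> k"
      using h_least[of i k] Suc unfolding b_def by simp
    ultimately show ?thesis
      using failed_armijo_step_lower_bound[of f "x k" b] eta_pos[of k] Lpos d_nz[of k]
      unfolding b_def by fastforce
  qed
qed

end
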